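(* For a positive integer $m$, let $C(m)=\{c_1,\dots,c_m\}$ and $v^*_m$ be the vote $c_1\succ c_2\succ\dots\succ c_m$. For integers $0\le k\le m(m-1)/2$ and $j,i\in[m]$, let $T(m,k,j,i)$ be the number of votes over $C(m)$ at swap distance exactly $k$ from $v^*_m$ that rank $c_j$ in position $i$. There is an algorithm that computes $T(m,k,j,i)$ in time polynomial in $m$.
   Context: A vote over a candidate set is a total order (position 1 is the top). The swap distance between two votes is the minimum number of swaps of adjacent candidates needed to transform one into the other (equivalently, the number of candidate pairs ordered differently). *)

theory Defs
  imports Main
begin

text \<open>Candidates c_1..c_m are represented by the naturals 1..m. A vote over C(m) is a
list v (position p, 1-based, holds the candidate v ! (p-1)) with distinct v and
set v = {1..m}.\<close>

definition votes :: "nat \<Rightarrow> nat list set" where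
  "votes m = {v. distinct v \<and> set v = {1..m}}"

definition ref_vote :: "nat \<Rightarrow> nat list" where
  "ref_vote m = [1..<m+1]"

definition prefers :: "nat list \<Rightarrow> nat \<Rightarrow> nat \<Rightarrow> bool" where
  "prefers v a b \<longleftrightarrow> (\<exists>p q. p < q \<and> q < length v \<and> v ! p = a \<and> v ! q = b)"

definition swap_dist :: "nat list \<Rightarrow> nat list \<Rightarrow> nat" where
  "swap_dist v w = card {(a, b). prefers v a b \<and> prefers w b a}"

definition T :: "nat \<Rightarrow> nat \<Rightarrow> nat \<Rightarrow> nat \<Rightarrow> nat" where
  "T m k j i = card {v \<in> votes m. swap_dist v (ref_vote m) = k \<and> v ! (i - 1) = j}"

datatype instr =
    Const nat nat
  | Add nat nat nat
  | Sub nat nat nat      \<comment> \<open>M[r] := M[a] - M[b] (truncated)\<close>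
  | Load nat nat
  | Store nat nat
  | Jz nat nat
  | Jmp nat
  | Halt

type_synonym config = "nat \<times> (nat \<Rightarrow> nat)"

definition halted :: "instr list \<Rightarrow> config \<Rightarrow> bool" where
  "halted P c \<longleftrightarrow> fst c \<ge> length P \<or> P ! fst c = Halt"

fun exec :: "instr \<Rightarrow> config \<Rightarrow> config" where
  "exec (Const r n) (pc, M) = (Suc pc, M(r := n))"
| "exec (Add r a b) (pc, M) = (Suc pc, M(r := M a + M b))"
| "exec (Sub r a b) (pc, M) = (Suc pc, M(r := M a - M b))"
| "exec (Load r a) (pc, M) = (Suc pc, M(r := M (M a)))"
| "exec (Store a r) (pc, M) = (Suc pc, M(M a := M r))"
| "exec (Jz r l) (pc, M) = (if M r = 0 then l else Suc pc, M)"
| "exec (Jmp l) (pc, M) = (l, M)"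
| "exec Halt (pc, M) = (pc, M)"

definition step :: "instr list \<Rightarrow> config \<Rightarrow> config" where
  "step P c = (if halted P c then c else exec (P ! fst c) c)"

definition run :: "instr list \<Rightarrow> nat \<Rightarrow> config \<Rightarrow> config" where
  "run P t c = (step P ^^ t) c"

text \<open>Input (m,k,j,i) in registers 0..3, all other registers 0; output in register 0.\<close>
definition init4 :: "nat \<Rightarrow> nat \<Rightarrow> nat \<Rightarrow> nat \<Rightarrow> config" where
  "init4 m k j i = (0, (\<lambda>_. 0)(0 := m, 1 := k, 2 := j, 3 := i))"

end

theory Submission
  imports Defs "HOL-Combinatorics.Multiset_Permutations"
begin

text \<open>The swap distance of a vote to \<open>v\<^sup>*\<^sub>m\<close> is its number of inversions. Removing the first
  entry of a permutation of an \<open>n\<close>-set removes exactly \<open>c\<close> inversions if that entry has rank \<open>c\<close>,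
  and lowers the rank of every larger element by one. This yields recursions for the Mahonian
  numbers (permutations with \<open>s\<close> inversions) and for their refinement counting only permutations
  whose entry at position \<open>i\<close> has rank \<open>r\<close>; \<open>T m k j i\<close> is the refined count for \<open>n = m\<close>,
  \<open>r = j - 1\<close>, position \<open>i - 1\<close> and \<open>s = k\<close>. A RAM program evaluates the recursions by dynamic programming on a table of
  \<open>j + 1\<close> rows of length \<open>k + 1 \<le> m\<^sup>2\<close>: \<open>O(m)\<close> layers of \<open>O(m)\<close> row updates, each entry a sum of
  \<open>O(m)\<close> entries, hence \<open>O(m\<^sup>5)\<close> steps.\<close>

section \<open>Inversions\<close>

fun inversions :: "nat list \<Rightarrow> nat" where
  "inversions [] = 0"
| "inversions (x # xs) = length (filter (\<lambda>y. y < x) xs) + inversions xs"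

lemma prefers_Cons:
  "prefers (x # xs) a b \<longleftrightarrow> a = x \<and> b \<in> set xs \<or> prefers xs a b"
proof
  assume "prefers (x # xs) a b"
  then obtain p q where pq: "p < q" "q < Suc (length xs)" "(x # xs) ! p = a" "(x # xs) ! q = b"
    unfolding prefers_def by auto
  then obtain q' where "q = Suc q'" by (cases q) auto
  with pq show "a = x \<and> b \<in> set xs \<or> prefers xs a b"
    unfolding prefers_def by (cases p) auto
next
  assume "a = x \<and> b \<in> set xs \<or> prefers xs a b"
  then show "prefers (x # xs) a b"
  proof
    assume "a = x \<and> b \<in> set xs"
    then obtain q where "q < length xs" "xs ! q = b" "a = x" by (auto simp: in_set_conv_nth)
    then show ?thesis unfolding prefers_def by (intro exI[of _ 0] exI[of _ "Suc q"]) auto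
  next
    assume "prefers xs a b"
    then obtain p q where "p < q" "q < length xs" "xs ! p = a" "xs ! q = b"
      unfolding prefers_def by blast
    then show ?thesis unfolding prefers_def by (intro exI[of _ "Suc p"] exI[of _ "Suc q"]) auto
  qed
qed

lemma prefers_in_set: "prefers v a b \<Longrightarrow> a \<in> set v \<and> b \<in> set v"
  unfolding prefers_def by auto

lemma card_inverted_pairs:
  "distinct v \<Longrightarrow> card {(a, b). prefers v a b \<and> b < a} = inversions v"
proof (induction v)
  case Nil
  then show ?case by (simp add: prefers_def)
next
  case (Cons x xs)
  have split: "{(a, b). prefers (x # xs) a b \<and> b < a}
      = Pair x ` {b \<in> set xs. b < x} \<union> {(a, b). prefers xs a b \<and> b < a}"
    by (auto simp: prefers_Cons)
  have "finite {(a, b). prefers xs a b \<and> b < a}"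
    by (rule finite_subset[of _ "set xs \<times> set xs"]) (auto dest: prefers_in_set)
  moreover have "Pair x ` {b \<in> set xs. b < x} \<inter> {(a, b). prefers xs a b \<and> b < a} = {}"
    using Cons.prems by (auto dest: prefers_in_set)
  moreover have "card (Pair x ` {b \<in> set xs. b < x}) = length (filter (\<lambda>y. y < x) xs)"
    using Cons.prems
    by (subst card_image) (auto simp: inj_on_def distinct_length_filter Int_def conj_commute)
  ultimately show ?case
    using Cons by (simp add: split card_Un_disjoint)
qed

lemma prefers_ref_vote:
  assumes "a \<in> {1..m}" "b \<in> {1..m}"
  shows "prefers (ref_vote m) a b \<longleftrightarrow> a < b"
proof
  assume "prefers (ref_vote m) a b"
  then show "a < b" unfolding prefers_def ref_vote_def by (auto simp del: upt_Suc)
next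
  assume "a < b"
  moreover have "[1..<m+1] ! (a - 1) = a" "[1..<m+1] ! (b - 1) = b"
    using assms by (simp_all del: upt_Suc)
  ultimately show "prefers (ref_vote m) a b"
    using assms unfolding prefers_def ref_vote_def
    by (intro exI[of _ "a - 1"] exI[of _ "b - 1"]) (auto simp del: upt_Suc)
qed

lemma swap_dist_ref_vote:
  assumes "v \<in> votes m"
  shows "swap_dist v (ref_vote m) = inversions v"
proof -
  have "{(a, b). prefers v a b \<and> prefers (ref_vote m) b a} = {(a, b). prefers v a b \<and> b < a}"
  proof -
    have "prefers (ref_vote m) b a \<longleftrightarrow> b < a" if "prefers v a b" for a b
      using assms prefers_in_set[OF that] prefers_ref_vote[of b m a] by (simp add: votes_def)
    then show ?thesis by blast
  qed
  then show ?thesis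
    using assms card_inverted_pairs by (simp add: swap_dist_def votes_def)
qed

section \<open>Counting permutations by inversions and position\<close>

lemma card_permutations_of_set_by_head:
  assumes "finite A" "A \<noteq> {}"
  shows "card {v \<in> permutations_of_set A. Q v}
       = (\<Sum>x\<in>A. card {w \<in> permutations_of_set (A - {x}). Q (x # w)})"
proof -
  define S where "S x = {w \<in> permutations_of_set (A - {x}). Q (x # w)}" for x
  have "{v \<in> permutations_of_set A. Q v} = (\<Union>x\<in>A. (#) x ` S x)"
  proof (intro equalityI subsetI)
    fix v assume v: "v \<in> {v \<in> permutations_of_set A. Q v}"
    then obtain x w where vxw: "v = x # w"
      using assms(2) by (cases v) (auto simp: permutations_of_set_def)
    with v have "x \<in> A" "w \<in> S x"
      by (auto simp: S_def permutations_of_set_def)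
    with vxw show "v \<in> (\<Union>x\<in>A. (#) x ` S x)" by blast
  next
    fix v assume "v \<in> (\<Union>x\<in>A. (#) x ` S x)"
    then obtain x w where "x \<in> A" "w \<in> S x" "v = x # w" by blast
    then show "v \<in> {v \<in> permutations_of_set A. Q v}"
      by (simp add: S_def permutations_of_set_def insert_absorb)
  qed
  then have "card {v \<in> permutations_of_set A. Q v} = (\<Sum>x\<in>A. card ((#) x ` S x))"
    by (simp only:) (rule card_UN_disjoint[OF assms(1)], auto simp: S_def)
  also have "\<dots> = (\<Sum>x\<in>A. card (S x))"
    by (intro sum.cong refl card_image) simp
  finally show ?thesis by (simp only: S_def)
qed

definition rank :: "nat set \<Rightarrow> nat \<Rightarrow> nat" where
  "rank A x = card {y \<in> A. y < x}"

lemma rank_strict_mono: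
  assumes "finite A" "x \<in> A" "x < y"
  shows "rank A x < rank A y"
  unfolding rank_def using assms by (intro psubset_card_mono) auto

lemma rank_less_iff:
  assumes "finite A" "x \<in> A" "y \<in> A"
  shows "rank A x < rank A y \<longleftrightarrow> x < y"
  using rank_strict_mono[OF assms(1,2)] rank_strict_mono[OF assms(1,3)]
  by (metis less_asym linorder_neqE_nat)

lemma rank_less_card: "finite A \<Longrightarrow> x \<in> A \<Longrightarrow> rank A x < card A"
  unfolding rank_def by (intro psubset_card_mono) auto

lemma bij_betw_rank: "finite A \<Longrightarrow> bij_betw (rank A) A {..<card A}"
proof -
  assume A: "finite A"
  have inj: "inj_on (rank A) A"
    using rank_less_iff[OF A] by (metis inj_onI less_irrefl linorder_neqE_nat)
  moreover have "rank A ` A \<subseteq> {..<card A}" using A rank_less_card by auto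
  moreover have "card (rank A ` A) = card {..<card A}" using card_image[OF inj] by simp
  ultimately show ?thesis
    unfolding bij_betw_def by (simp add: card_subset_eq)
qed

lemma rank_Diff_singleton:
  assumes "x \<noteq> j"
  shows "rank (A - {x}) j = (if x \<in> A \<and> x < j then rank A j - 1 else rank A j)"
proof -
  have "{y \<in> A - {x}. y < j} = {y \<in> A. y < j} - {x}" by auto
  then show ?thesis unfolding rank_def by (simp add: card_Diff_singleton)
qed

lemma rank_Diff_other:
  assumes "finite A" "x \<in> A" "j \<in> A" "x \<noteq> j"
  shows "rank (A - {x}) j = (if rank A x < rank A j then rank A j - 1 else rank A j)"
  using rank_Diff_singleton[OF assms(4)] rank_less_iff[OF assms(1-3)] assms(2) by simp

lemma inversions_Cons_perm:
  assumes "w \<in> permutations_of_set (A - {x})"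
  shows "inversions (x # w) = rank A x + inversions w"
proof -
  have "set (filter (\<lambda>y. y < x) w) = {y \<in> A. y < x}"
    using assms by (auto simp: permutations_of_set_def)
  then show ?thesis
    using assms distinct_card[of "filter (\<lambda>y. y < x) w"]
    by (simp add: rank_def permutations_of_set_def)
qed

lemma card_perms_Cons_inversions:
  "card {w \<in> permutations_of_set (A - {x}). inversions (x # w) = s \<and> P w}
     = (if rank A x \<le> s then card {w \<in> permutations_of_set (A - {x}). inversions w = s - rank A x \<and> P w}
        else 0)"
proof -
  have "{w \<in> permutations_of_set (A - {x}). inversions (x # w) = s \<and> P w}
      = {w \<in> permutations_of_set (A - {x}). rank A x + inversions w = s \<and> P w}"
    using inversions_Cons_perm[of _ A x] by (intro Collect_cong conj_cong refl) simp_all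
  also have "\<dots> = (if rank A x \<le> s
      then {w \<in> permutations_of_set (A - {x}). inversions w = s - rank A x \<and> P w} else {})"
    by auto
  finally show ?thesis by simp
qed

lemma sum_rank_reindex: "finite A \<Longrightarrow> (\<Sum>x\<in>A. g (rank A x)) = (\<Sum>c<card A. g c)"
  using sum.reindex_bij_betw[OF bij_betw_rank] by blast

definition window_conv :: "(nat \<Rightarrow> nat) \<Rightarrow> nat \<Rightarrow> nat \<Rightarrow> nat \<Rightarrow> nat" where
  "window_conv f lo hi s = (\<Sum>c\<in>{lo..<hi}. if c \<le> s then f (s - c) else 0)"

lemma window_conv_empty [simp]: "window_conv f lo lo s = 0"
  by (simp add: window_conv_def)

lemma window_conv_singleton [simp]: "window_conv f r (Suc r) s = (if r \<le> s then f (s - r) else 0)"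
  by (simp add: window_conv_def)

lemma window_conv_cong:
  "(\<And>t. t \<le> s \<Longrightarrow> f t = g t) \<Longrightarrow> window_conv f lo hi s = window_conv g lo hi s"
  unfolding window_conv_def by (intro sum.cong) auto

fun mahonian :: "nat \<Rightarrow> nat \<Rightarrow> nat" where
  "mahonian 0 s = (if s = 0 then 1 else 0)"
| "mahonian (Suc n) s = window_conv (mahonian n) 0 (Suc n) s"

text \<open>A first entry of rank \<open>c\<close> contributes \<open>c\<close> inversions and lowers the rank \<open>r\<close> of the tracked
  element iff \<open>c < r\<close>; the junk value \<open>r - 1\<close> at \<open>r = 0\<close> is harmless, as \<open>{0..<r}\<close> is empty then.\<close>
fun mahonian_pos :: "nat \<Rightarrow> nat \<Rightarrow> nat \<Rightarrow> nat \<Rightarrow> nat" where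
  "mahonian_pos n r 0 s = window_conv (mahonian (n - 1)) r (Suc r) s"
| "mahonian_pos n r (Suc i) s =
     window_conv (mahonian_pos (n - 1) (r - 1) i) 0 r s + window_conv (mahonian_pos (n - 1) r i) (Suc r) n s"

theorem card_perms_inversions:
  "finite A \<Longrightarrow> card {v \<in> permutations_of_set A. inversions v = s} = mahonian (card A) s"
proof (induction "card A" arbitrary: A s)
  case 0
  then have "{v \<in> permutations_of_set A. inversions v = s} = (if s = 0 then {[]} else {})"
    by auto
  then show ?case using 0 by simp
next
  case (Suc n)
  then have "A \<noteq> {}" by auto
  have "card {v \<in> permutations_of_set A. inversions v = s}
      = (\<Sum>x\<in>A. card {w \<in> permutations_of_set (A - {x}). inversions (x # w) = s})"
    by (rule card_permutations_of_set_by_head[OF Suc.prems \<open>A \<noteq> {}\<close>])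
  also have "\<dots> = (\<Sum>x\<in>A. if rank A x \<le> s then mahonian n (s - rank A x) else 0)"
  proof (rule sum.cong[OF refl])
    fix x assume "x \<in> A"
    then have "n = card (A - {x})" using Suc.hyps(2) Suc.prems by simp
    show "card {w \<in> permutations_of_set (A - {x}). inversions (x # w) = s}
        = (if rank A x \<le> s then mahonian n (s - rank A x) else 0)"
    proof -
      have "card {w \<in> permutations_of_set (A - {x}). inversions (x # w) = s}
          = (if rank A x \<le> s then card {w \<in> permutations_of_set (A - {x}). inversions w = s - rank A x} else 0)"
        using card_perms_Cons_inversions[where P = "\<lambda>_. True"] by simp
      then show ?thesis
        using Suc.hyps(1)[OF \<open>n = card (A - {x})\<close>] Suc.prems \<open>n = card (A - {x})\<close> by simp
    qed
  qed
  also have "\<dots> = (\<Sum>c<Suc n. if c \<le> s then mahonian n (s - c) else 0)"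
    using sum_rank_reindex[OF Suc.prems, of "\<lambda>c. if c \<le> s then mahonian n (s - c) else 0"] Suc.hyps(2)
    by simp
  also have "\<dots> = mahonian (Suc n) s"
    by (simp add: window_conv_def atLeast0LessThan)
  finally show ?case using Suc.hyps(2) by simp
qed

lemma sum_skip_eq_window_conv:
  assumes "r < n"
  shows "(\<Sum>c<n. if c = r then 0 else if c \<le> s then F (if c < r then r - 1 else r) (s - c) else 0)
       = window_conv (F (r - 1)) 0 r s + window_conv (F r) (Suc r) n s"
proof -
  have "{..<n} = {0..<r} \<union> {r} \<union> {Suc r..<n}" using assms by auto
  then show ?thesis
    unfolding window_conv_def by (simp add: sum.union_disjoint) (intro arg_cong2[where f = "(+)"] sum.cong; simp)
qed

lemma card_perms_inversions_hd:
  assumes "finite A" "j \<in> A"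
  shows "card {v \<in> permutations_of_set A. inversions v = s \<and> v ! 0 = j}
       = mahonian_pos (card A) (rank A j) 0 s"
proof -
  have "A \<noteq> {}" using assms by auto
  have "card {v \<in> permutations_of_set A. inversions v = s \<and> v ! 0 = j}
      = (\<Sum>x\<in>A. card {w \<in> permutations_of_set (A - {x}). inversions (x # w) = s \<and> x = j})"
    by (simp add: card_permutations_of_set_by_head[OF assms(1) \<open>A \<noteq> {}\<close>] del: inversions.simps)
  also have "\<dots> = (\<Sum>x\<in>A. if x = j then card {w \<in> permutations_of_set (A - {j}). inversions (j # w) = s} else 0)"
    by (intro sum.cong refl) (simp del: inversions.simps)
  also have "\<dots> = card {w \<in> permutations_of_set (A - {j}). inversions (j # w) = s}"
    using assms by simp
  also have "\<dots> = mahonian_pos (card A) (rank A j) 0 s"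
    using card_perms_Cons_inversions[where P = "\<lambda>_. True"] card_perms_inversions[of "A - {j}"] assms
    by (simp del: inversions.simps)
  finally show ?thesis .
qed

theorem card_perms_inversions_nth:
  assumes "finite A" "j \<in> A" "i < card A"
  shows "card {v \<in> permutations_of_set A. inversions v = s \<and> v ! i = j}
       = mahonian_pos (card A) (rank A j) i s"
  using assms
proof (induction i arbitrary: A s)
  case 0
  then show ?case using card_perms_inversions_hd by blast
next
  case (Suc i)
  define r where "r = rank A j"
  define n where "n = card A"
  define g where "g c = (if c \<le> s then mahonian_pos (n - 1) (if c < r then r - 1 else r) i (s - c) else 0)" for c
  have "A \<noteq> {}" using Suc.prems by auto
  have "card {v \<in> permutations_of_set A. inversions v = s \<and> v ! Suc i = j}
      = (\<Sum>x\<in>A. card {w \<in> permutations_of_set (A - {x}). inversions (x # w) = s \<and> w ! i = j})"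
    by (simp add: card_permutations_of_set_by_head[OF Suc.prems(1) \<open>A \<noteq> {}\<close>] del: inversions.simps)
  also have "\<dots> = (\<Sum>x\<in>A. if rank A x = r then 0 else g (rank A x))"
  proof (rule sum.cong[OF refl])
    fix x assume x: "x \<in> A"
    show "card {w \<in> permutations_of_set (A - {x}). inversions (x # w) = s \<and> w ! i = j}
        = (if rank A x = r then 0 else g (rank A x))"
    proof (cases "x = j")
      case True
      have "w ! i \<noteq> j" if "w \<in> permutations_of_set (A - {j})" for w
        using that Suc.prems nth_mem[of i w] length_finite_permutations_of_set[OF that]
        by (auto simp: permutations_of_set_def)
      then show ?thesis using True r_def by (simp del: inversions.simps)
    next
      case False
      then have "rank A x \<noteq> r"
        using rank_less_iff[OF Suc.prems(1) x Suc.prems(2)] rank_less_iff[OF Suc.prems(1) Suc.prems(2) x]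
        unfolding r_def by (cases x j rule: linorder_cases) auto
      moreover have "i < card (A - {x})" "j \<in> A - {x}"
        using Suc.prems x False by auto
      ultimately show ?thesis
        using card_perms_Cons_inversions[where P = "\<lambda>w. w ! i = j"] Suc.IH[of "A - {x}"] Suc.prems x
          rank_Diff_other[OF Suc.prems(1) x Suc.prems(2) False]
        by (simp add: g_def r_def n_def del: inversions.simps)
    qed
  qed
  also have "\<dots> = (\<Sum>c<n. if c = r then 0 else g c)"
    unfolding n_def by (rule sum_rank_reindex[OF Suc.prems(1)])
  also have "\<dots> = mahonian_pos n r (Suc i) s"
    using sum_skip_eq_window_conv[of r n s "\<lambda>r. mahonian_pos (n - 1) r i"] rank_less_card[OF Suc.prems(1,2)]
    unfolding g_def r_def n_def by simp
  finally show ?case unfolding r_def n_def .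
qed

lemma T_eq_mahonian_pos:
  assumes "j \<in> {1..m}" "i \<in> {1..m}"
  shows "T m k j i = mahonian_pos m (j - 1) (i - 1) k"
proof -
  have votes: "votes m = permutations_of_set {1..m}"
    by (auto simp: votes_def permutations_of_set_def)
  have "T m k j i = card {v \<in> permutations_of_set {1..m}. inversions v = k \<and> v ! (i - 1) = j}"
    unfolding T_def votes using swap_dist_ref_vote[of _ m] votes by (metis (no_types, lifting))
  also have "\<dots> = mahonian_pos m (rank {1..m} j) (i - 1) k"
    using card_perms_inversions_nth[of "{1..m}" j "i - 1" k] assms by fastforce
  also have "rank {1..m} j = j - 1"
  proof -
    have "{y \<in> {1..m}. y < j} = {1..<j}" using assms by auto
    then show ?thesis unfolding rank_def by simp
  qed
  finally show ?thesis .
qed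

section \<open>A structured language compiled to RAM code\<close>

datatype com = Instr instr | Seq com com (infixr ";;" 60) | While nat com

fun basic_instr :: "instr \<Rightarrow> bool" where
  "basic_instr (Jz r l) = False"
| "basic_instr (Jmp l) = False"
| "basic_instr Halt = False"
| "basic_instr _ = True"

fun wf_com :: "com \<Rightarrow> bool" where
  "wf_com (Instr i) = basic_instr i"
| "wf_com (c1 ;; c2) = (wf_com c1 \<and> wf_com c2)"
| "wf_com (While r c) = wf_com c"

fun code_size :: "com \<Rightarrow> nat" where
  "code_size (Instr i) = 1"
| "code_size (c1 ;; c2) = code_size c1 + code_size c2"
| "code_size (While r c) = code_size c + 2"

fun compile :: "nat \<Rightarrow> com \<Rightarrow> instr list" where
  "compile p (Instr i) = [i]"
| "compile p (c1 ;; c2) = compile p c1 @ compile (p + code_size c1) c2"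
| "compile p (While r c) = [Jz r (p + code_size c + 2)] @ compile (Suc p) c @ [Jmp p]"

lemma length_compile [simp]: "length (compile p c) = code_size c"
  by (induction c arbitrary: p) auto

definition effect :: "instr \<Rightarrow> (nat \<Rightarrow> nat) \<Rightarrow> (nat \<Rightarrow> nat)" where
  "effect i M = snd (exec i (0, M))"

lemma effect_simps [simp]:
  "effect (Const r n) M = M(r := n)"
  "effect (Add r a b) M = M(r := M a + M b)"
  "effect (Sub r a b) M = M(r := M a - M b)"
  "effect (Load r a) M = M(r := M (M a))"
  "effect (Store a r) M = M(M a := M r)"
  by (simp_all add: effect_def)

lemma exec_basic_instr: "basic_instr i \<Longrightarrow> exec i (pc, M) = (Suc pc, effect i M)"
  by (cases i) (auto simp: effect_def)

inductive big_step :: "com \<Rightarrow> (nat \<Rightarrow> nat) \<Rightarrow> (nat \<Rightarrow> nat) \<Rightarrow> nat \<Rightarrow> bool" where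
  Instr: "big_step (Instr i) M (effect i M) 1"
| Seq: "big_step c1 M M1 t1 \<Longrightarrow> big_step c2 M1 M2 t2 \<Longrightarrow> big_step (c1 ;; c2) M M2 (t1 + t2)"
| WhileFalse: "M r = 0 \<Longrightarrow> big_step (While r c) M M 1"
| WhileTrue: "M r \<noteq> 0 \<Longrightarrow> big_step c M M1 t1 \<Longrightarrow> big_step (While r c) M1 M2 t2 \<Longrightarrow>
    big_step (While r c) M M2 (t1 + t2 + 2)"

lemma run_add: "run P (t1 + t2) c = run P t2 (run P t1 c)"
  unfolding run_def by (subst add.commute) (simp add: funpow_add)

lemma run_one: "run P (Suc 0) c = step P c"
  by (simp add: run_def)

lemma run_halted: "halted P c \<Longrightarrow> run P t c = c"
  by (induction t) (simp_all add: run_def step_def)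

definition code_at :: "instr list \<Rightarrow> nat \<Rightarrow> com \<Rightarrow> bool" where
  "code_at P p c \<longleftrightarrow> p + code_size c \<le> length P \<and> (\<forall>q < code_size c. P ! (p + q) = compile p c ! q)"

lemma code_at_Seq:
  assumes "code_at P p (c1 ;; c2)"
  shows "code_at P p c1" "code_at P (p + code_size c1) c2"
  using assms unfolding code_at_def
  by (auto simp: nth_append dest!: spec[of _ "code_size c1 + _"] simp flip: add.assoc)

lemma code_at_While:
  assumes "code_at P p (While r c)"
  shows "code_at P (Suc p) c" "P ! p = Jz r (p + code_size c + 2)"
    "P ! (Suc p + code_size c) = Jmp p" "Suc p + code_size c < length P"
proof -
  have size: "p + (code_size c + 2) \<le> length P"
    and code: "\<And>q. q < code_size c + 2 \<Longrightarrow>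
      P ! (p + q) = ([Jz r (p + code_size c + 2)] @ compile (Suc p) c @ [Jmp p]) ! q"
    using assms unfolding code_at_def by (simp_all only: code_size.simps compile.simps)
  show "P ! p = Jz r (p + code_size c + 2)" using code[of 0] by simp
  show "P ! (Suc p + code_size c) = Jmp p" using code[of "Suc (code_size c)"] by (simp add: nth_append)
  show "Suc p + code_size c < length P" using size by simp
  show "code_at P (Suc p) c"
    unfolding code_at_def using size code[of "Suc _"] by (auto simp: nth_append)
qed

lemma step_basic_instr:
  assumes "pc < length P" "P ! pc = i" "basic_instr i"
  shows "step P (pc, M) = (Suc pc, effect i M)"
proof -
  have "\<not> halted P (pc, M)" using assms unfolding halted_def by (cases i) auto
  then show ?thesis unfolding step_def using assms exec_basic_instr by simp
qed

theorem big_step_run: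
  assumes "big_step c M M' t" "wf_com c" "code_at P p c"
  shows "run P t (p, M) = (p + code_size c, M')"
  using assms
proof (induction arbitrary: p rule: big_step.induct)
  case (Instr i M)
  then have "P ! p = i" "p < length P" unfolding code_at_def by auto
  then show ?case using Instr step_basic_instr by (simp add: run_one)
next
  case (Seq c1 M M1 t1 c2 M2 t2)
  then show ?case using code_at_Seq[OF Seq.prems(2)] by (simp add: run_add add.assoc)
next
  case (WhileFalse M r c)
  note code = code_at_While[OF WhileFalse.prems(2)]
  have "\<not> halted P (p, M)" using code unfolding halted_def by simp
  then show ?case using code WhileFalse by (simp add: run_one step_def)
next
  case (WhileTrue M r c M1 t1 M2 t2)
  note code = code_at_While[OF WhileTrue.prems(2)]
  have "\<not> halted P (p, M)" "\<not> halted P (Suc p + code_size c, M1)"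
    using code unfolding halted_def by simp_all
  then have "run P 1 (p, M) = (Suc p, M)" "run P 1 (Suc p + code_size c, M1) = (p, M1)"
    using code WhileTrue.hyps(1) by (simp_all add: run_one step_def)
  moreover have "run P t1 (Suc p, M) = (Suc p + code_size c, M1)"
    using WhileTrue code by simp
  moreover have "run P (t1 + t2 + 2) (p, M) = run P t2 (run P 1 (run P t1 (run P 1 (p, M))))"
    by (simp add: run_add[symmetric] algebra_simps)
  ultimately show ?case using WhileTrue by simp
qed

definition reaches :: "com \<Rightarrow> (nat \<Rightarrow> nat) \<Rightarrow> ((nat \<Rightarrow> nat) \<Rightarrow> bool) \<Rightarrow> nat \<Rightarrow> bool" where
  "reaches c M Q B \<longleftrightarrow> (\<exists>M' t. big_step c M M' t \<and> Q M' \<and> t \<le> B)"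

lemma reaches_mono: "reaches c M Q B' \<Longrightarrow> B' \<le> B \<Longrightarrow> reaches c M Q B"
  unfolding reaches_def by force

lemma reaches_conseq: "reaches c M Q B \<Longrightarrow> (\<And>M'. Q M' \<Longrightarrow> Q' M') \<Longrightarrow> reaches c M Q' B"
  unfolding reaches_def by blast

lemma reaches_Instr: "Q (effect i M) \<Longrightarrow> reaches (Instr i) M Q 1"
  unfolding reaches_def by (blast intro: big_step.intros)

lemma reaches_Seq:
  assumes "reaches c1 M Q1 B1" "\<And>M1. Q1 M1 \<Longrightarrow> reaches c2 M1 Q B2"
  shows "reaches (c1 ;; c2) M Q (B1 + B2)"
  using assms unfolding reaches_def by (fastforce intro: big_step.intros add_mono)

lemma reaches_Instr_Seq: "reaches c (effect i M) Q B \<Longrightarrow> reaches (Instr i ;; c) M Q (Suc B)"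
  using reaches_Seq[OF reaches_Instr[of "\<lambda>M'. M' = effect i M"]] by simp

text \<open>In \<open>I q\<close>, \<open>q\<close> is the number of iterations still to come.\<close>
lemma reaches_While:
  assumes body: "\<And>q M. I (Suc q) M \<Longrightarrow> reaches c M (I q) B"
    and guard: "\<And>q M. I q M \<Longrightarrow> M r = 0 \<longleftrightarrow> q = 0"
    and "I q M"
  shows "reaches (While r c) M (I 0) (q * (B + 2) + 1)"
  using \<open>I q M\<close>
proof (induction q arbitrary: M)
  case 0
  then show ?case using guard[OF 0] unfolding reaches_def by (force intro: big_step.intros)
next
  case (Suc q)
  from body[OF Suc.prems] obtain M1 t1 where 1: "big_step c M M1 t1" "I q M1" "t1 \<le> B"
    unfolding reaches_def by blast
  from Suc.IH[OF 1(2)] obtain M2 t2 where 2: "big_step (While r c) M1 M2 t2" "I 0 M2" "t2 \<le> q * (B + 2) + 1"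
    unfolding reaches_def by blast
  have "M r \<noteq> 0" using guard[OF Suc.prems] by simp
  then have "big_step (While r c) M M2 (t1 + t2 + 2)" using 1 2 by (blast intro: big_step.intros)
  then show ?case unfolding reaches_def using 1 2 by (intro exI[of _ M2] exI[of _ "t1 + t2 + 2"]) auto
qed

theorem reaches_run:
  assumes "reaches c M Q B" "wf_com c"
  obtains M' where "Q M'" "run (compile 0 c @ [Halt]) B (0, M) = (code_size c, M')"
    "halted (compile 0 c @ [Halt]) (code_size c, M')"
proof -
  let ?P = "compile 0 c @ [Halt]"
  obtain M' t where run: "big_step c M M' t" "Q M'" "t \<le> B"
    using assms(1) unfolding reaches_def by blast
  have "code_at ?P 0 c" unfolding code_at_def by (simp add: nth_append)
  then have "run ?P t (0, M) = (code_size c, M')" using big_step_run[OF run(1) assms(2)] by simp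
  moreover have halted: "halted ?P (code_size c, M')" unfolding halted_def by (simp add: nth_append)
  ultimately have "run ?P B (0, M) = (code_size c, M')"
    using run_add[of ?P t "B - t"] run(3) run_halted by simp
  then show thesis using that run(2) halted by blast
qed

section \<open>Window sums and row updates\<close>

text \<open>Registers 0--3 hold the input \<open>m, k, j, i\<close> and registers 4--15 the variables of the main
  program; \<open>reg_zero\<close> stays 0, so \<open>Add r a reg_zero\<close> copies \<open>a\<close> to \<open>r\<close>. The row and window loops
  write only their scratch registers 20--26 and, for the row loop, the target row. The table starts
  at address 32.\<close>
abbreviation (input) reg_m :: nat where "reg_m \<equiv> 0"
abbreviation (input) reg_k :: nat where "reg_k \<equiv> 1"
abbreviation (input) reg_j :: nat where "reg_j \<equiv> 2"
abbreviation (input) reg_i :: nat where "reg_i \<equiv> 3"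
abbreviation (input) reg_one :: nat where "reg_one \<equiv> 4"
abbreviation (input) reg_width :: nat where "reg_width \<equiv> 5"
abbreviation (input) reg_n0 :: nat where "reg_n0 \<equiv> 6"
abbreviation (input) reg_n :: nat where "reg_n \<equiv> 7"
abbreviation (input) reg_count :: nat where "reg_count \<equiv> 8"
abbreviation (input) reg_row :: nat where "reg_row \<equiv> 9"
abbreviation (input) reg_src :: nat where "reg_src \<equiv> 10"
abbreviation (input) reg_dst :: nat where "reg_dst \<equiv> 11"
abbreviation (input) reg_lo :: nat where "reg_lo \<equiv> 12"
abbreviation (input) reg_hi :: nat where "reg_hi \<equiv> 13"
abbreviation (input) reg_zero :: nat where "reg_zero \<equiv> 14"
abbreviation (input) reg_target :: nat where "reg_target \<equiv> 15"
abbreviation (input) reg_s :: nat where "reg_s \<equiv> 20"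
abbreviation (input) reg_acc :: nat where "reg_acc \<equiv> 21"
abbreviation (input) reg_left :: nat where "reg_left \<equiv> 22"
abbreviation (input) reg_ptr :: nat where "reg_ptr \<equiv> 23"
abbreviation (input) reg_tmp :: nat where "reg_tmp \<equiv> 24"
abbreviation (input) reg_tmp2 :: nat where "reg_tmp2 \<equiv> 25"
abbreviation (input) reg_end :: nat where "reg_end \<equiv> 26"

definition window_step :: com where
  "window_step = Instr (Sub reg_left reg_left reg_one) ;; Instr (Load reg_tmp reg_ptr) ;;
     Instr (Add reg_acc reg_acc reg_tmp) ;; Instr (Sub reg_ptr reg_ptr reg_one)"

text \<open>With \<open>s\<close> in \<open>reg_s\<close>, the setup puts \<open>min hi (s + 1)\<close> into \<open>reg_end\<close> by two truncated
  subtractions; the loop then adds the cells \<open>p + s - c\<close> for \<open>lo \<le> c < reg_end\<close> to \<open>reg_acc\<close>.\<close>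
definition window_loop :: "nat \<Rightarrow> nat \<Rightarrow> nat \<Rightarrow> com" where
  "window_loop p lo hi = Instr (Add reg_tmp reg_s reg_one) ;; Instr (Sub reg_tmp2 hi reg_tmp) ;;
     Instr (Sub reg_end hi reg_tmp2) ;; Instr (Sub reg_left reg_end lo) ;;
     Instr (Add reg_ptr p reg_s) ;; Instr (Sub reg_ptr reg_ptr lo) ;; While reg_left window_step"

lemma window_conv_eq_sum:
  "window_conv f lo hi s = (\<Sum>c\<in>{lo..<lo + (min hi (Suc s) - lo)}. f (s - c))"
proof -
  have "window_conv f lo hi s = (\<Sum>c\<in>{lo..<hi} \<inter> {..s}. f (s - c))"
    unfolding window_conv_def using sum.inter_restrict[of "{lo..<hi}" "\<lambda>c. f (s - c)" "{..s}"] by simp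
  also have "{lo..<hi} \<inter> {..s} = {lo..<lo + (min hi (Suc s) - lo)}" by auto
  finally show ?thesis .
qed

definition window_inv :: "(nat \<Rightarrow> nat) \<Rightarrow> nat \<Rightarrow> nat \<Rightarrow> nat \<Rightarrow> nat \<Rightarrow> (nat \<Rightarrow> nat) \<Rightarrow> bool" where
  "window_inv M addr lo n q M' \<longleftrightarrow> q \<le> n \<and> M' reg_left = q \<and> M' reg_ptr = addr - (lo + (n - q))
     \<and> M' reg_acc = M reg_acc + (\<Sum>c\<in>{lo..<lo + (n - q)}. M (addr - c))
     \<and> (\<forall>a. (a < 21 \<or> 26 < a) \<longrightarrow> M' a = M a)"

lemma window_step_reaches:
  assumes inv: "window_inv M addr lo n (Suc q) M'" and one: "M reg_one = 1" and far: "27 + lo + n \<le> addr"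
  shows "reaches window_step M' (window_inv M addr lo n q) 4"
proof -
  define d where "d = n - Suc q"
  define a where "a = addr - (lo + d)"
  have q: "Suc q \<le> n" "n - q = Suc d" and regs: "M' reg_left = Suc q" "M' reg_ptr = a" "M' reg_one = 1"
    and acc: "M' reg_acc = M reg_acc + (\<Sum>c\<in>{lo..<lo + d}. M (addr - c))"
    and frame: "\<forall>a. (a < 21 \<or> 26 < a) \<longrightarrow> M' a = M a"
    using inv one unfolding window_inv_def a_def d_def by auto
  have "26 < a" using q far unfolding a_def d_def by simp
  then have eff: "effect (Sub reg_ptr reg_ptr reg_one) (effect (Add reg_acc reg_acc reg_tmp)
      (effect (Load reg_tmp reg_ptr) (effect (Sub reg_left reg_left reg_one) M')))
    = M'(reg_left := q, reg_tmp := M a, reg_acc := M' reg_acc + M a, reg_ptr := a - 1)"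
    using regs frame by (simp add: fun_upd_twist)
  have "(\<Sum>c\<in>{lo..<lo + Suc d}. M (addr - c)) = (\<Sum>c\<in>{lo..<lo + d}. M (addr - c)) + M a"
    unfolding a_def by simp
  then have "window_inv M addr lo n q
      (M'(reg_left := q, reg_tmp := M a, reg_acc := M' reg_acc + M a, reg_ptr := a - 1))"
    using q acc frame unfolding window_inv_def a_def by simp
  then have "reaches window_step M' (window_inv M addr lo n q) (Suc (Suc (Suc 1)))"
    unfolding window_step_def by (intro reaches_Instr_Seq reaches_Instr) (simp only: eff)
  then show ?thesis by (simp add: numeral_eq_Suc)
qed

lemma window_loop_reaches:
  assumes one: "M reg_one = 1" and regs: "p < 20" "lo < 20" "hi < 20"
    and far: "32 \<le> M p" and bound: "M hi \<le> X"
  shows "reaches (window_loop p lo hi) M (\<lambda>M'.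
      M' reg_acc = M reg_acc + window_conv (\<lambda>t. M (M p + t)) (M lo) (M hi) (M reg_s)
      \<and> (\<forall>a. (a < 21 \<or> 26 < a) \<longrightarrow> M' a = M a)) (8 + 6 * X)"
    (is "reaches _ M ?Q _")
proof -
  define s where "s = M reg_s"
  define n where "n = min (M hi) (Suc s) - M lo"
  define I where "I = window_inv M (M p + s) (M lo) n"
  define M1 where "M1 = effect (Sub reg_ptr reg_ptr lo) (effect (Add reg_ptr p reg_s)
    (effect (Sub reg_left reg_end lo) (effect (Sub reg_end hi reg_tmp2)
    (effect (Sub reg_tmp2 hi reg_tmp) (effect (Add reg_tmp reg_s reg_one) M)))))"
  have "reaches (While reg_left window_step) M1 (I 0) (n * (4 + 2) + 1)"
  proof (rule reaches_While[where I = I])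
    show "I n M1"
      using regs one unfolding I_def window_inv_def n_def s_def M1_def by auto
    show "reaches window_step M' (I q) 4" if "I (Suc q) M'" for q M'
    proof -
      have "Suc q \<le> n" using that unfolding I_def window_inv_def by simp
      then have "27 + M lo + n \<le> M p + s" using far unfolding n_def by auto
      then show ?thesis using that one unfolding I_def by (intro window_step_reaches)
    qed
  qed (auto simp: I_def window_inv_def)
  moreover have "(\<Sum>c\<in>{M lo..<M lo + n}. M (M p + s - c)) = window_conv (\<lambda>t. M (M p + t)) (M lo) (M hi) s"
    unfolding window_conv_eq_sum n_def by (rule sum.cong) auto
  ultimately have "reaches (While reg_left window_step) M1 ?Q (n * (4 + 2) + 1)"
    by (elim reaches_conseq) (auto simp: I_def window_inv_def s_def)
  then have "reaches (window_loop p lo hi) M ?Q (Suc (Suc (Suc (Suc (Suc (Suc (n * (4 + 2) + 1)))))))"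
    unfolding window_loop_def M1_def by (intro reaches_Instr_Seq)
  moreover have "Suc (Suc (Suc (Suc (Suc (Suc (n * (4 + 2) + 1)))))) \<le> 8 + 6 * X"
    using bound unfolding n_def by simp
  ultimately show ?thesis by (rule reaches_mono)
qed

definition row_step :: "nat \<Rightarrow> nat \<Rightarrow> nat \<Rightarrow> nat \<Rightarrow> nat \<Rightarrow> nat \<Rightarrow> com" where
  "row_step p1 lo1 hi1 p2 lo2 hi2 = Instr (Sub reg_s reg_s reg_one) ;; Instr (Const reg_acc 0) ;;
     window_loop p1 lo1 hi1 ;; window_loop p2 lo2 hi2 ;;
     Instr (Add reg_ptr p2 reg_s) ;; Instr (Store reg_ptr reg_acc)"

lemma row_step_reaches:
  assumes s: "M reg_s = Suc q" and one: "M reg_one = 1"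
    and regs: "p1 < 20" "lo1 < 20" "hi1 < 20" "p2 < 20" "lo2 < 20" "hi2 < 20"
    and far: "32 \<le> M p1" "32 \<le> M p2" and bound: "M hi1 \<le> X" "M hi2 \<le> X"
  shows "reaches (row_step p1 lo1 hi1 p2 lo2 hi2) M (\<lambda>M'.
      M' (M p2 + q) = window_conv (\<lambda>t. M (M p1 + t)) (M lo1) (M hi1) q
                      + window_conv (\<lambda>t. M (M p2 + t)) (M lo2) (M hi2) q
      \<and> M' reg_s = q \<and> (\<forall>a. (a < 20 \<or> 26 < a) \<and> a \<noteq> M p2 + q \<longrightarrow> M' a = M a)) (20 + 12 * X)"
    (is "reaches _ M ?Q _")
proof -
  define w1 where "w1 = window_conv (\<lambda>t. M (M p1 + t)) (M lo1) (M hi1) q"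
  define w2 where "w2 = window_conv (\<lambda>t. M (M p2 + t)) (M lo2) (M hi2) q"
  define Ma where "Ma = effect (Const reg_acc 0) (effect (Sub reg_s reg_s reg_one) M)"
  have Ma: "Ma = M(reg_s := q, reg_acc := 0)" using s one unfolding Ma_def by simp
  have "reaches (window_loop p1 lo1 hi1) Ma
      (\<lambda>M'. M' reg_acc = w1 \<and> (\<forall>a. (a < 21 \<or> 26 < a) \<longrightarrow> M' a = Ma a)) (8 + 6 * X)"
    using window_loop_reaches[of Ma p1 lo1 hi1 X] one regs far bound
    by (auto simp: Ma w1_def elim!: reaches_conseq)
  moreover have "reaches (window_loop p2 lo2 hi2 ;; Instr (Add reg_ptr p2 reg_s) ;; Instr (Store reg_ptr reg_acc))
      Mb ?Q (8 + 6 * X + Suc 1)"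
    if Mb: "Mb reg_acc = w1 \<and> (\<forall>a. (a < 21 \<or> 26 < a) \<longrightarrow> Mb a = Ma a)" for Mb
  proof (rule reaches_Seq)
    have "Mb reg_acc = w1" using Mb by simp
    have "Mb reg_s = q" using Mb by (simp add: Ma)
    have Mb: "Mb a = M a" if "a < 20 \<or> 26 < a" for a using that Mb by (auto simp: Ma)
    then show "reaches (window_loop p2 lo2 hi2) Mb
        (\<lambda>M'. M' reg_acc = w1 + w2 \<and> (\<forall>a. (a < 21 \<or> 26 < a) \<longrightarrow> M' a = Mb a)) (8 + 6 * X)"
      using window_loop_reaches[of Mb p2 lo2 hi2 X] one regs far bound \<open>Mb reg_acc = w1\<close> \<open>Mb reg_s = q\<close>
      by (auto simp: Mb w2_def elim!: reaches_conseq)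
    fix Mc assume Mc: "Mc reg_acc = w1 + w2 \<and> (\<forall>a. (a < 21 \<or> 26 < a) \<longrightarrow> Mc a = Mb a)"
    have "effect (Store reg_ptr reg_acc) (effect (Add reg_ptr p2 reg_s) Mc)
        = Mc(reg_ptr := M p2 + q, M p2 + q := w1 + w2)"
      using Mc Mb regs \<open>Mb reg_s = q\<close> far by simp
    moreover have "Mc a = M a" if "a < 20 \<or> 26 < a" for a using that Mc Mb by fastforce
    ultimately show "reaches (Instr (Add reg_ptr p2 reg_s) ;; Instr (Store reg_ptr reg_acc)) Mc ?Q (Suc 1)"
      using far \<open>Mb reg_s = q\<close> Mc by (intro reaches_Instr_Seq reaches_Instr) (simp add: w1_def w2_def)
  qed
  ultimately have "reaches (window_loop p1 lo1 hi1 ;; window_loop p2 lo2 hi2 ;;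
      Instr (Add reg_ptr p2 reg_s) ;; Instr (Store reg_ptr reg_acc)) Ma ?Q (8 + 6 * X + (8 + 6 * X + Suc 1))"
    by (rule reaches_Seq)
  then have "reaches (row_step p1 lo1 hi1 p2 lo2 hi2) M ?Q (Suc (Suc (8 + 6 * X + (8 + 6 * X + Suc 1))))"
    unfolding row_step_def Ma_def by (intro reaches_Instr_Seq)
  then show ?thesis by (rule reaches_mono) simp
qed

text \<open>For \<open>s = k, \<dots>, 0\<close> (with \<open>k\<close> in \<open>reg_k\<close>), cell \<open>s\<close> of the row at \<open>p2\<close> is overwritten
  by the sum of two window convolutions of the rows at \<open>p1\<close> and \<open>p2\<close>. Since \<open>s\<close> decreases, the
  second one only reads cells of row \<open>p2\<close> that still hold their old values.\<close>
definition row_loop :: "nat \<Rightarrow> nat \<Rightarrow> nat \<Rightarrow> nat \<Rightarrow> nat \<Rightarrow> nat \<Rightarrow> com" where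
  "row_loop p1 lo1 hi1 p2 lo2 hi2 =
     Instr (Add reg_s reg_k reg_one) ;; While reg_s (row_step p1 lo1 hi1 p2 lo2 hi2)"

lemma row_loop_reaches:
  assumes one: "M reg_one = 1" and regs: "p1 < 20" "lo1 < 20" "hi1 < 20" "p2 < 20" "lo2 < 20" "hi2 < 20"
    and far: "32 \<le> M p1" "32 \<le> M p2" and apart: "M p1 + M reg_k < M p2 \<or> M p2 + M reg_k < M p1"
    and bound: "M hi1 \<le> X" "M hi2 \<le> X"
  shows "reaches (row_loop p1 lo1 hi1 p2 lo2 hi2) M (\<lambda>M'.
      (\<forall>s \<le> M reg_k. M' (M p2 + s) = window_conv (\<lambda>t. M (M p1 + t)) (M lo1) (M hi1) s
                                     + window_conv (\<lambda>t. M (M p2 + t)) (M lo2) (M hi2) s)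
    \<and> (\<forall>a. (a < 20 \<or> 26 < a) \<and> (a < M p2 \<or> M p2 + M reg_k < a) \<longrightarrow> M' a = M a))
    (2 + Suc (M reg_k) * (22 + 12 * X))"
proof -
  define k where "k = M reg_k"
  define Pa where "Pa = M p1"
  define Pb where "Pb = M p2"
  define new where "new s = window_conv (\<lambda>t. M (Pa + t)) (M lo1) (M hi1) s
                           + window_conv (\<lambda>t. M (Pb + t)) (M lo2) (M hi2) s" for s
  define I where "I q M' \<longleftrightarrow> M' reg_s = q \<and> q \<le> Suc k
      \<and> (\<forall>s \<le> k. M' (Pb + s) = (if q \<le> s then new s else M (Pb + s)))
      \<and> (\<forall>a. (a < 20 \<or> 26 < a) \<and> (a < Pb \<or> Pb + k < a) \<longrightarrow> M' a = M a)" for q M'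
  have body: "reaches (row_step p1 lo1 hi1 p2 lo2 hi2) M' (I q) (20 + 12 * X)" if "I (Suc q) M'" for q M'
  proof -
    have q: "q \<le> k" "M' reg_s = Suc q"
      and row: "\<And>s. s \<le> k \<Longrightarrow> M' (Pb + s) = (if Suc q \<le> s then new s else M (Pb + s))"
      and frame: "\<And>a. (a < 20 \<or> 26 < a) \<and> (a < Pb \<or> Pb + k < a) \<Longrightarrow> M' a = M a"
      using that unfolding I_def by auto
    have low: "M' a = M a" if "a < 20" for a using that frame far unfolding Pb_def by auto
    have "window_conv (\<lambda>t. M' (Pa + t)) (M lo1) (M hi1) q = window_conv (\<lambda>t. M (Pa + t)) (M lo1) (M hi1) q"
      using q(1) apart far by (intro window_conv_cong frame) (auto simp: Pa_def Pb_def k_def)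
    moreover have "window_conv (\<lambda>t. M' (Pb + t)) (M lo2) (M hi2) q = window_conv (\<lambda>t. M (Pb + t)) (M lo2) (M hi2) q"
      using q(1) row by (intro window_conv_cong) auto
    ultimately have step: "reaches (row_step p1 lo1 hi1 p2 lo2 hi2) M' (\<lambda>M''.
        M'' (Pb + q) = new q \<and> M'' reg_s = q \<and> (\<forall>a. (a < 20 \<or> 26 < a) \<and> a \<noteq> Pb + q \<longrightarrow> M'' a = M' a))
        (20 + 12 * X)"
      using row_step_reaches[of M' q p1 lo1 hi1 p2 lo2 hi2 X] q(2) one regs far bound
      by (simp add: low Pa_def Pb_def new_def)
    show ?thesis
    proof (rule reaches_conseq[OF step])
      fix M'' assume M'': "M'' (Pb + q) = new q \<and> M'' reg_s = q
          \<and> (\<forall>a. (a < 20 \<or> 26 < a) \<and> a \<noteq> Pb + q \<longrightarrow> M'' a = M' a)"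
      have "M'' (Pb + s) = (if q \<le> s then new s else M (Pb + s))" if "s \<le> k" for s
        using M'' row[OF that] far by (cases "s = q") (auto simp: Pb_def)
      moreover have "M'' a = M a" if "(a < 20 \<or> 26 < a) \<and> (a < Pb \<or> Pb + k < a)" for a
        using that M'' frame q(1) by auto
      ultimately show "I q M''" using M'' q(1) unfolding I_def by auto
    qed
  qed
  have "reaches (While reg_s (row_step p1 lo1 hi1 p2 lo2 hi2)) (M(reg_s := Suc k)) (I 0)
      (Suc k * (20 + 12 * X + 2) + 1)"
    by (rule reaches_While[where I = I, OF body]) (use far in \<open>auto simp: I_def Pb_def\<close>)
  then have "reaches (row_loop p1 lo1 hi1 p2 lo2 hi2) M (I 0) (Suc (Suc k * (20 + 12 * X + 2) + 1))"
    unfolding row_loop_def using one by (intro reaches_Instr_Seq) (simp add: k_def)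
  then show ?thesis
    by (rule reaches_mono[OF reaches_conseq]) (auto simp: I_def new_def k_def Pa_def Pb_def)
qed

section \<open>The table program\<close>

definition mahonian_step :: com where
  "mahonian_step = Instr (Sub reg_count reg_count reg_one) ;; Instr (Add reg_n reg_n reg_one) ;;
     row_loop reg_src reg_lo reg_hi reg_dst reg_zero reg_n"

text \<open>Row 0 is built in place; the first window is empty, so row 1 is only a dummy source.\<close>
definition mahonian_phase :: com where
  "mahonian_phase = Instr (Const reg_one 1) ;; Instr (Add reg_width reg_k reg_one) ;;
     Instr (Const reg_dst 32) ;; Instr (Store reg_dst reg_one) ;; Instr (Add reg_src reg_dst reg_width) ;;
     Instr (Const reg_lo 0) ;; Instr (Const reg_hi 0) ;; Instr (Const reg_zero 0) ;;
     Instr (Add reg_n0 reg_m reg_one) ;; Instr (Sub reg_n0 reg_n0 reg_i) ;;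
     Instr (Sub reg_count reg_n0 reg_one) ;; Instr (Const reg_n 0) ;;
     While reg_count mahonian_step"

definition init_step :: com where
  "init_step = Instr (Sub reg_count reg_count reg_one) ;; Instr (Add reg_lo reg_row reg_zero) ;;
     Instr (Add reg_row reg_row reg_one) ;; Instr (Add reg_dst reg_dst reg_width) ;;
     row_loop reg_src reg_lo reg_row reg_dst reg_zero reg_zero"

definition init_phase :: com where
  "init_phase = Instr (Const reg_src 32) ;; Instr (Const reg_row 0) ;; Instr (Add reg_count reg_j reg_zero) ;;
     While reg_count init_step"

definition update_step :: com where
  "update_step = Instr (Sub reg_src reg_dst reg_width) ;; Instr (Sub reg_hi reg_row reg_one) ;;
     row_loop reg_src reg_lo reg_hi reg_dst reg_row reg_n ;;
     Instr (Sub reg_row reg_row reg_one) ;; Instr (Add reg_dst reg_src reg_zero)"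

definition layer_step :: com where
  "layer_step = Instr (Sub reg_count reg_count reg_one) ;; Instr (Add reg_n reg_n reg_one) ;;
     Instr (Add reg_row reg_j reg_zero) ;; Instr (Add reg_dst reg_target reg_zero) ;;
     While reg_row update_step"

definition layer_phase :: com where
  "layer_phase = Instr (Add reg_n reg_n0 reg_zero) ;; Instr (Add reg_target reg_dst reg_zero) ;;
     Instr (Sub reg_count reg_m reg_n0) ;; Instr (Const reg_lo 0) ;;
     While reg_count layer_step"

definition output_cell :: com where
  "output_cell = Instr (Add reg_tmp reg_target reg_k) ;; Instr (Load reg_m reg_tmp)"

definition main_prog :: com where
  "main_prog = mahonian_phase ;; init_phase ;; layer_phase ;; output_cell"

lemma time_poly_bound:
  fixes X a b c :: nat
  assumes "1 \<le> X" "a \<le> X" "b \<le> X" "c \<le> X"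
  shows "13 + a * (36 * X ^ 3 + 4) + (4 + b * (36 * X ^ 3 + 6) + (5 + c * (7 + b * (36 * X ^ 3 + 6)) + 2))
    \<le> 200 * X ^ 5"
proof -
  have pow: "X ^ e \<le> X ^ 5" if "e \<le> 5" for e
    using power_increasing[OF that, of X] assms(1) by simp
  have a: "a * (36 * X ^ 3 + 4) \<le> X * (36 * X ^ 3 + 4)" and b: "b * (36 * X ^ 3 + 6) \<le> X * (36 * X ^ 3 + 6)"
    using assms by (intro mult_right_mono; simp)+
  moreover have "c * (7 + b * (36 * X ^ 3 + 6)) \<le> X * (7 + X * (36 * X ^ 3 + 6))"
    using assms b by (intro mult_mono) simp_all
  ultimately have "13 + a * (36 * X ^ 3 + 4) + (4 + b * (36 * X ^ 3 + 6) + (5 + c * (7 + b * (36 * X ^ 3 + 6)) + 2))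
      \<le> 24 + X * (36 * X ^ 3 + 4) + X * (36 * X ^ 3 + 6) + X * (7 + X * (36 * X ^ 3 + 6))"
    by linarith
  also have "\<dots> = 24 + 17 * X + 6 * X ^ 2 + 72 * X ^ 4 + 36 * X ^ 5"
    by (simp add: algebra_simps eval_nat_numeral)
  also have "\<dots> \<le> 200 * X ^ 5"
    using pow[of 0] pow[of 1] pow[of 2] pow[of 4] by simp
  finally show ?thesis .
qed

lemma row_cell_less:
  assumes "\<rho> < \<rho>'" "s \<le> k"
  shows "\<rho> * Suc k + s < \<rho>' * Suc k"
proof -
  have "\<rho> * Suc k + s < Suc \<rho> * Suc k" using assms(2) by simp
  also have "\<dots> \<le> \<rho>' * Suc k" using assms(1) by (intro mult_right_mono) auto
  finally show ?thesis .
qed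

text \<open>Row \<open>\<rho>\<close> of the table occupies the cells \<open>32 + \<rho> (k + 1) + s\<close>, \<open>s \<le> k\<close>. With
  \<open>n0 = m - (i - 1)\<close>, row 0 first receives \<open>mahonian (n0 - 1)\<close>; then in layer \<open>t = 0, \<dots>, i - 1\<close>
  row \<open>\<rho> \<in> {1..j}\<close> holds \<open>mahonian_pos (n0 + t) (\<rho> - 1) t\<close>, so that cell \<open>k\<close> of row \<open>j\<close> ends up
  holding \<open>T m k j i\<close>.\<close>
locale table_input =
  fixes m k j i :: nat
  assumes k_le: "k \<le> m * (m - 1) div 2" and j_range: "j \<in> {1..m}" and i_range: "i \<in> {1..m}"
begin

abbreviation n0 :: nat where "n0 \<equiv> Suc m - i"

abbreviation row_time :: nat where "row_time \<equiv> 36 * Suc m ^ 3"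

definition fixed_regs :: "(nat \<Rightarrow> nat) \<Rightarrow> bool" where
  "fixed_regs M \<longleftrightarrow> M reg_m = m \<and> M reg_k = k \<and> M reg_j = j \<and> M reg_i = i \<and> M reg_one = 1
     \<and> M reg_width = Suc k \<and> M reg_n0 = n0 \<and> M reg_zero = 0"

definition row_is :: "(nat \<Rightarrow> nat) \<Rightarrow> nat \<Rightarrow> (nat \<Rightarrow> nat) \<Rightarrow> bool" where
  "row_is M \<rho> f \<longleftrightarrow> (\<forall>s \<le> k. M (32 + \<rho> * Suc k + s) = f s)"

lemma fixed_regs_fun_upd [simp]:
  "a \<notin> {reg_m, reg_k, reg_j, reg_i, reg_one, reg_width, reg_n0, reg_zero} \<Longrightarrow>
    fixed_regs (M(a := v)) \<longleftrightarrow> fixed_regs M"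
  unfolding fixed_regs_def by auto

lemma fixed_regs_frame: "fixed_regs M \<Longrightarrow> \<forall>a<20. M' a = M a \<Longrightarrow> fixed_regs M'"
  unfolding fixed_regs_def by simp

lemma row_is_fun_upd [simp]: "a < 32 \<Longrightarrow> row_is (M(a := v)) \<rho> f \<longleftrightarrow> row_is M \<rho> f"
  unfolding row_is_def by auto

lemma row_is_self: "row_is M \<rho> (\<lambda>s. M (32 + \<rho> * Suc k + s))"
  unfolding row_is_def by simp

lemma window_conv_row:
  "row_is M \<rho> f \<Longrightarrow> s \<le> k \<Longrightarrow> window_conv (\<lambda>t. M (32 + \<rho> * Suc k + t)) lo hi s = window_conv f lo hi s"
  unfolding row_is_def by (intro window_conv_cong) auto

lemma row_time_bound: "2 + Suc k * (22 + 12 * Suc m) \<le> row_time"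
proof -
  have "k \<le> m * (m - 1)" using k_le div_le_dividend le_trans by blast
  also have "\<dots> \<le> m * m" by simp
  finally have "Suc k \<le> Suc m * Suc m" by simp
  then have "2 + Suc k * (22 + 12 * Suc m) \<le> 2 + Suc m * Suc m * (22 + 12 * Suc m)"
    by (intro add_left_mono mult_right_mono) auto
  also have "\<dots> \<le> row_time"
    by (simp add: power3_eq_cube algebra_simps)
  finally show ?thesis .
qed

lemma row_loop_table:
  assumes fixed: "fixed_regs M" and regs: "p1 < 20" "lo1 < 20" "hi1 < 20" "p2 < 20" "lo2 < 20" "hi2 < 20"
    and rows: "M p1 = 32 + r1 * Suc k" "M p2 = 32 + r2 * Suc k" "r1 \<noteq> r2"
    and bound: "M hi1 \<le> Suc m" "M hi2 \<le> Suc m"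
    and f: "row_is M r1 f1" "row_is M r2 f2"
  shows "reaches (row_loop p1 lo1 hi1 p2 lo2 hi2) M (\<lambda>M'. (\<forall>a<20. M' a = M a)
     \<and> (\<forall>\<rho> f. \<rho> \<noteq> r2 \<longrightarrow> row_is M \<rho> f \<longrightarrow> row_is M' \<rho> f)
     \<and> row_is M' r2 (\<lambda>s. window_conv f1 (M lo1) (M hi1) s + window_conv f2 (M lo2) (M hi2) s)) row_time"
proof -
  have regs': "M reg_k = k" "M reg_one = 1" using fixed unfolding fixed_regs_def by auto
  have apart: "M p1 + M reg_k < M p2 \<or> M p2 + M reg_k < M p1"
    using rows regs' row_cell_less[of r1 r2 k k] row_cell_less[of r2 r1 k k] by (cases "r1 < r2") auto
  have outside: "32 + \<rho> * Suc k + s < M p2 \<or> M p2 + M reg_k < 32 + \<rho> * Suc k + s"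
    if "\<rho> \<noteq> r2" "s \<le> k" for \<rho> s
    using that rows regs' row_cell_less[of \<rho> r2 s k] row_cell_less[of r2 \<rho> k k] by (cases "\<rho> < r2") auto
  show ?thesis
  proof (rule reaches_mono[OF reaches_conseq[OF row_loop_reaches[OF regs'(2) regs _ _ apart bound]]])
    show "32 \<le> M p1" "32 \<le> M p2" using rows by auto
    show "2 + Suc (M reg_k) * (22 + 12 * Suc m) \<le> row_time" using row_time_bound regs' by simp
  next
    fix M' assume post: "(\<forall>s \<le> M reg_k. M' (M p2 + s) = window_conv (\<lambda>t. M (M p1 + t)) (M lo1) (M hi1) s
        + window_conv (\<lambda>t. M (M p2 + t)) (M lo2) (M hi2) s)
      \<and> (\<forall>a. (a < 20 \<or> 26 < a) \<and> (a < M p2 \<or> M p2 + M reg_k < a) \<longrightarrow> M' a = M a)"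
    have "\<forall>a<20. M' a = M a" using post rows by simp
    moreover have "row_is M' \<rho> f" if "\<rho> \<noteq> r2" "row_is M \<rho> f" for \<rho> f
      using that post outside[OF that(1)] unfolding row_is_def by auto
    moreover have "row_is M' r2 (\<lambda>s. window_conv f1 (M lo1) (M hi1) s + window_conv f2 (M lo2) (M hi2) s)"
      using post rows regs' window_conv_row[OF f(1)] window_conv_row[OF f(2)]
      unfolding row_is_def by (simp add: add.assoc)
    ultimately show "(\<forall>a<20. M' a = M a) \<and> (\<forall>\<rho> f. \<rho> \<noteq> r2 \<longrightarrow> row_is M \<rho> f \<longrightarrow> row_is M' \<rho> f)
      \<and> row_is M' r2 (\<lambda>s. window_conv f1 (M lo1) (M hi1) s + window_conv f2 (M lo2) (M hi2) s)"
      by blast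
  qed
qed

definition mahonian_inv :: "nat \<Rightarrow> (nat \<Rightarrow> nat) \<Rightarrow> bool" where
  "mahonian_inv q M \<longleftrightarrow> fixed_regs M \<and> M reg_count = q \<and> M reg_n + q = n0 - 1
     \<and> M reg_src = 32 + Suc k \<and> M reg_dst = 32 \<and> M reg_lo = 0 \<and> M reg_hi = 0
     \<and> row_is M 0 (mahonian (M reg_n))"

lemma mahonian_step_reaches:
  assumes "mahonian_inv (Suc q) M"
  shows "reaches mahonian_step M (mahonian_inv q) (Suc (Suc row_time))"
proof -
  define n where "n = M reg_n"
  define M2 where "M2 = M(reg_count := q, reg_n := Suc n)"
  have inv: "fixed_regs M2" "M2 reg_src = 32 + 1 * Suc k" "M2 reg_dst = 32 + 0 * Suc k"
    "M2 reg_lo = 0" "M2 reg_hi = 0" "M2 reg_zero = 0" "M2 reg_n = Suc n" "n + Suc q = n0 - 1"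
    "row_is M2 0 (mahonian n)"
    using assms by (auto simp: mahonian_inv_def M2_def n_def fixed_regs_def)
  have "effect (Add reg_n reg_n reg_one) (effect (Sub reg_count reg_count reg_one) M) = M2"
    using assms by (simp add: mahonian_inv_def fixed_regs_def M2_def n_def)
  moreover have "reaches (row_loop reg_src reg_lo reg_hi reg_dst reg_zero reg_n) M2 (mahonian_inv q) row_time"
  proof (rule reaches_conseq[OF row_loop_table[OF inv(1) _ _ _ _ _ _ inv(2,3) _ _ _ row_is_self inv(9)]])
    fix M' assume post: "(\<forall>a<20. M' a = M2 a) \<and> (\<forall>\<rho> f. \<rho> \<noteq> 0 \<longrightarrow> row_is M2 \<rho> f \<longrightarrow> row_is M' \<rho> f)
      \<and> row_is M' 0 (\<lambda>s. window_conv (\<lambda>s. M2 (32 + 1 * Suc k + s)) (M2 reg_lo) (M2 reg_hi) s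
                            + window_conv (mahonian n) (M2 reg_zero) (M2 reg_n) s)"
    have "mahonian (Suc n) = (\<lambda>s. window_conv (mahonian n) 0 (Suc n) s)" by auto
    then show "mahonian_inv q M'"
      using post inv fixed_regs_frame[OF inv(1)] by (auto simp: mahonian_inv_def M2_def)
  qed (use inv i_range in auto)
  ultimately show ?thesis
    unfolding mahonian_step_def by (intro reaches_Instr_Seq) simp
qed

lemma mahonian_phase_reaches:
  "reaches mahonian_phase (snd (init4 m k j i)) (mahonian_inv 0) (13 + (n0 - 1) * (row_time + 4))"
proof -
  define M1 where "M1 = effect (Const reg_n 0) (effect (Sub reg_count reg_n0 reg_one)
    (effect (Sub reg_n0 reg_n0 reg_i) (effect (Add reg_n0 reg_m reg_one) (effect (Const reg_zero 0)
    (effect (Const reg_hi 0) (effect (Const reg_lo 0) (effect (Add reg_src reg_dst reg_width)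
    (effect (Store reg_dst reg_one) (effect (Const reg_dst 32) (effect (Add reg_width reg_k reg_one)
    (effect (Const reg_one 1) (snd (init4 m k j i)))))))))))))"
  have "mahonian_inv (n0 - 1) M1"
    by (auto simp: mahonian_inv_def fixed_regs_def row_is_def M1_def init4_def)
  then have loop: "reaches (While reg_count mahonian_step) M1 (mahonian_inv 0)
      ((n0 - 1) * (Suc (Suc row_time) + 2) + 1)"
    by (intro reaches_While[where I = mahonian_inv, OF mahonian_step_reaches])
      (auto simp: mahonian_inv_def)
  show ?thesis
    unfolding mahonian_phase_def
    by (rule reaches_mono, (rule reaches_Instr_Seq)+, rule loop[unfolded M1_def]) (simp add: algebra_simps)
qed

definition init_inv :: "nat \<Rightarrow> (nat \<Rightarrow> nat) \<Rightarrow> bool" where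
  "init_inv q M \<longleftrightarrow> fixed_regs M \<and> M reg_count = q \<and> q \<le> j \<and> M reg_row = j - q
     \<and> M reg_dst = 32 + (j - q) * Suc k \<and> M reg_src = 32 \<and> row_is M 0 (mahonian (n0 - 1))
     \<and> (\<forall>\<rho>. 1 \<le> \<rho> \<and> \<rho> \<le> j - q \<longrightarrow> row_is M \<rho> (mahonian_pos n0 (\<rho> - 1) 0))"

lemma init_step_reaches:
  assumes "init_inv (Suc q) M"
  shows "reaches init_step M (init_inv q) (row_time + 4)"
proof -
  define r where "r = j - Suc q"
  define M4 where "M4 = M(reg_count := q, reg_lo := r, reg_row := Suc r, reg_dst := 32 + Suc r * Suc k)"
  have inv: "fixed_regs M4" "M4 reg_src = 32 + 0 * Suc k" "M4 reg_dst = 32 + Suc r * Suc k"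
    "M4 reg_lo = r" "M4 reg_row = Suc r" "M4 reg_zero = 0" "row_is M4 0 (mahonian (n0 - 1))"
    "j - q = Suc r" "Suc r \<le> j"
    and rows: "\<And>\<rho>. 1 \<le> \<rho> \<Longrightarrow> \<rho> \<le> r \<Longrightarrow> row_is M4 \<rho> (mahonian_pos n0 (\<rho> - 1) 0)"
    using assms unfolding init_inv_def M4_def r_def by (auto simp: fixed_regs_def)
  have eff: "effect (Add reg_dst reg_dst reg_width) (effect (Add reg_row reg_row reg_one)
      (effect (Add reg_lo reg_row reg_zero) (effect (Sub reg_count reg_count reg_one) M))) = M4"
    using assms unfolding init_inv_def fixed_regs_def M4_def r_def by (simp add: algebra_simps)
  have "reaches (row_loop reg_src reg_lo reg_row reg_dst reg_zero reg_zero) M4 (init_inv q) row_time"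
  proof (rule reaches_conseq[OF row_loop_table[OF inv(1) _ _ _ _ _ _ inv(2,3) _ _ _ inv(7) row_is_self]])
    fix M' assume post: "(\<forall>a<20. M' a = M4 a) \<and> (\<forall>\<rho> f. \<rho> \<noteq> Suc r \<longrightarrow> row_is M4 \<rho> f \<longrightarrow> row_is M' \<rho> f)
      \<and> row_is M' (Suc r) (\<lambda>s. window_conv (mahonian (n0 - 1)) (M4 reg_lo) (M4 reg_row) s
          + window_conv (\<lambda>s. M4 (32 + Suc r * Suc k + s)) (M4 reg_zero) (M4 reg_zero) s)"
    have "row_is M' (Suc r) (mahonian_pos n0 r 0)"
      using post inv unfolding row_is_def by simp
    moreover have "row_is M' \<rho> (mahonian_pos n0 (\<rho> - 1) 0)" if "1 \<le> \<rho>" "\<rho> \<le> r" for \<rho>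
      using post rows[OF that] that by simp
    ultimately show "init_inv q M'"
      using post inv fixed_regs_frame[OF inv(1)]
      unfolding init_inv_def by (auto simp: M4_def le_Suc_eq)
  qed (use inv j_range in auto)
  then show ?thesis
    unfolding init_step_def eff[symmetric]
    by (rule reaches_mono[OF reaches_Instr_Seq[OF reaches_Instr_Seq[OF reaches_Instr_Seq[OF reaches_Instr_Seq]]]])
      simp
qed

lemma init_phase_reaches:
  assumes "mahonian_inv 0 M"
  shows "reaches init_phase M (init_inv 0) (4 + j * (row_time + 6))"
proof -
  have "init_inv j (M(reg_src := 32, reg_row := 0, reg_count := j))"
    using assms by (auto simp: mahonian_inv_def init_inv_def fixed_regs_def)
  then have "reaches (While reg_count init_step) (M(reg_src := 32, reg_row := 0, reg_count := j))
      (init_inv 0) (j * (row_time + 4 + 2) + 1)"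
    by (intro reaches_While[where I = init_inv, OF init_step_reaches]) (auto simp: init_inv_def)
  then show ?thesis
    unfolding init_phase_def using assms
    by (intro reaches_mono[OF reaches_Instr_Seq[OF reaches_Instr_Seq[OF reaches_Instr_Seq]]])
      (auto simp: mahonian_inv_def fixed_regs_def)
qed

definition update_inv :: "nat \<Rightarrow> nat \<Rightarrow> nat \<Rightarrow> (nat \<Rightarrow> nat) \<Rightarrow> bool" where
  "update_inv c t r M \<longleftrightarrow> fixed_regs M \<and> M reg_count = c \<and> n0 + t < m \<and> M reg_n = Suc (n0 + t)
     \<and> M reg_target = 32 + j * Suc k \<and> M reg_lo = 0 \<and> M reg_row = r \<and> r \<le> j
     \<and> M reg_dst = 32 + r * Suc k
     \<and> (\<forall>\<rho>. 1 \<le> \<rho> \<and> \<rho> \<le> j \<longrightarrow> row_is M \<rho> (if r < \<rho> then mahonian_pos (Suc (n0 + t)) (\<rho> - 1) (Suc t)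
                                             else mahonian_pos (n0 + t) (\<rho> - 1) t))"

lemma update_step_reaches:
  assumes "update_inv c t (Suc r) M"
  shows "reaches update_step M (update_inv c t r) (row_time + 4)"
proof -
  define n where "n = Suc (n0 + t)"
  define M2 where "M2 = M(reg_src := 32 + r * Suc k, reg_hi := r)"
  have inv: "fixed_regs M2" "M2 reg_src = 32 + r * Suc k" "M2 reg_dst = 32 + Suc r * Suc k"
    "M2 reg_lo = 0" "M2 reg_hi = r" "M2 reg_row = Suc r" "M2 reg_n = n" "n \<le> m" "Suc r \<le> j"
    "M2 reg_count = c" "M2 reg_target = 32 + j * Suc k"
    and rows: "\<And>\<rho>. 1 \<le> \<rho> \<Longrightarrow> \<rho> \<le> j \<Longrightarrow> row_is M2 \<rho> (if Suc r < \<rho> then mahonian_pos n (\<rho> - 1) (Suc t)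
                                             else mahonian_pos (n - 1) (\<rho> - 1) t)"
    using assms unfolding update_inv_def M2_def n_def by auto
  have eff: "effect (Sub reg_hi reg_row reg_one) (effect (Sub reg_src reg_dst reg_width) M) = M2"
    using assms unfolding update_inv_def fixed_regs_def M2_def by simp
  have "reaches (row_loop reg_src reg_lo reg_hi reg_dst reg_row reg_n) M2 (\<lambda>M'. update_inv c t r
      (effect (Add reg_dst reg_src reg_zero) (effect (Sub reg_row reg_row reg_one) M'))) row_time"
  proof (rule reaches_conseq[OF row_loop_table[OF inv(1) _ _ _ _ _ _ inv(2,3) _ _ _ row_is_self rows]])
    fix M' assume post: "(\<forall>a<20. M' a = M2 a) \<and> (\<forall>\<rho> f. \<rho> \<noteq> Suc r \<longrightarrow> row_is M2 \<rho> f \<longrightarrow> row_is M' \<rho> f)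
      \<and> row_is M' (Suc r) (\<lambda>s. window_conv (\<lambda>s. M2 (32 + r * Suc k + s)) (M2 reg_lo) (M2 reg_hi) s
          + window_conv (if Suc r < Suc r then mahonian_pos n (Suc r - 1) (Suc t)
                         else mahonian_pos (n - 1) (Suc r - 1) t) (M2 reg_row) (M2 reg_n) s)"
    have "window_conv (\<lambda>s. M2 (32 + r * Suc k + s)) 0 r s = window_conv (mahonian_pos (n - 1) (r - 1) t) 0 r s"
      if "s \<le> k" for s
    proof (cases "r = 0")
      case False
      then have "row_is M2 r (mahonian_pos (n - 1) (r - 1) t)" using rows[of r] inv(9) by simp
      then show ?thesis using window_conv_row that by blast
    qed simp
    then have new: "row_is M' (Suc r) (mahonian_pos n r (Suc t))"
      using post inv unfolding row_is_def by (simp add: n_def)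
    have old: "row_is M' \<rho> (if r < \<rho> then mahonian_pos n (\<rho> - 1) (Suc t) else mahonian_pos (n - 1) (\<rho> - 1) t)"
      if "1 \<le> \<rho>" "\<rho> \<le> j" "\<rho> \<noteq> Suc r" for \<rho>
      using post rows[OF that(1,2)] that(3) by (auto simp: not_less_eq)
    have regs: "M' a = M2 a" if "a < 20" for a using post that by blast
    have "fixed_regs M'" using post fixed_regs_frame[OF inv(1)] by blast
    then have "effect (Add reg_dst reg_src reg_zero) (effect (Sub reg_row reg_row reg_one) M')
        = M'(reg_row := r, reg_dst := 32 + r * Suc k)"
      using regs inv by (simp add: fixed_regs_def)
    moreover have "update_inv c t r (M'(reg_row := r, reg_dst := 32 + r * Suc k))"
      unfolding update_inv_def
    proof (intro conjI allI impI)
      show "row_is (M'(reg_row := r, reg_dst := 32 + r * Suc k)) \<rho>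
          (if r < \<rho> then mahonian_pos (Suc (n0 + t)) (\<rho> - 1) (Suc t) else mahonian_pos (n0 + t) (\<rho> - 1) t)"
        if "1 \<le> \<rho> \<and> \<rho> \<le> j" for \<rho>
        using new old[of \<rho>] that by (cases "\<rho> = Suc r"; cases "r < \<rho>") (simp_all add: n_def)
    qed (use \<open>fixed_regs M'\<close> regs inv in \<open>auto simp: n_def\<close>)
    ultimately show "update_inv c t r (effect (Add reg_dst reg_src reg_zero) (effect (Sub reg_row reg_row reg_one) M'))"
      by simp
  qed (use inv j_range in auto)
  then show ?thesis
    unfolding update_step_def eff[symmetric]
    by (rule reaches_mono[OF reaches_Instr_Seq[OF reaches_Instr_Seq[OF reaches_Seq[OF _ reaches_Instr_Seq[OF reaches_Instr]]]]])
      simp_all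
qed

definition layer_inv :: "nat \<Rightarrow> (nat \<Rightarrow> nat) \<Rightarrow> bool" where
  "layer_inv q M \<longleftrightarrow> fixed_regs M \<and> M reg_count = q \<and> q \<le> m - n0 \<and> M reg_n = n0 + (m - n0 - q)
     \<and> M reg_target = 32 + j * Suc k \<and> M reg_lo = 0
     \<and> (\<forall>\<rho>. 1 \<le> \<rho> \<and> \<rho> \<le> j \<longrightarrow> row_is M \<rho> (mahonian_pos (n0 + (m - n0 - q)) (\<rho> - 1) (m - n0 - q)))"

lemma layer_step_reaches:
  assumes "layer_inv (Suc q) M"
  shows "reaches layer_step M (layer_inv q) (5 + j * (row_time + 6))"
proof -
  define t where "t = m - n0 - Suc q"
  define M4 where "M4 = M(reg_count := q, reg_n := Suc (n0 + t), reg_row := j, reg_dst := 32 + j * Suc k)"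
  have "update_inv q t j M4"
    using assms j_range unfolding layer_inv_def update_inv_def M4_def t_def by auto
  then have "reaches (While reg_row update_step) M4 (update_inv q t 0) (j * (row_time + 4 + 2) + 1)"
    by (intro reaches_While[where I = "update_inv q t", OF update_step_reaches]) (auto simp: update_inv_def)
  moreover have "effect (Add reg_dst reg_target reg_zero) (effect (Add reg_row reg_j reg_zero)
      (effect (Add reg_n reg_n reg_one) (effect (Sub reg_count reg_count reg_one) M))) = M4"
    using assms unfolding layer_inv_def fixed_regs_def M4_def t_def by auto
  moreover have "layer_inv q M'" if "update_inv q t 0 M'" for M'
  proof -
    have t: "m - n0 - q = Suc t" using assms unfolding layer_inv_def t_def by auto
    then have "q \<le> m - n0" by simp
    with that show ?thesis unfolding layer_inv_def update_inv_def t by auto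
  qed
  ultimately show ?thesis
    unfolding layer_step_def
    by (intro reaches_mono[OF reaches_Instr_Seq[OF reaches_Instr_Seq[OF reaches_Instr_Seq[OF reaches_Instr_Seq]]]])
      (auto elim: reaches_conseq)
qed

lemma layer_phase_reaches:
  assumes "init_inv 0 M"
  shows "reaches layer_phase M (layer_inv 0) (5 + (m - n0) * (7 + j * (row_time + 6)))"
proof -
  define M4 where "M4 = M(reg_n := n0, reg_target := 32 + j * Suc k, reg_count := m - n0, reg_lo := 0)"
  have "layer_inv (m - n0) M4"
    using assms unfolding init_inv_def layer_inv_def M4_def by auto
  then have "reaches (While reg_count layer_step) M4 (layer_inv 0) ((m - n0) * (5 + j * (row_time + 6) + 2) + 1)"
    by (intro reaches_While[where I = layer_inv, OF layer_step_reaches]) (auto simp: layer_inv_def)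
  moreover have "effect (Const reg_lo 0) (effect (Sub reg_count reg_m reg_n0)
      (effect (Add reg_target reg_dst reg_zero) (effect (Add reg_n reg_n0 reg_zero) M))) = M4"
    using assms unfolding init_inv_def fixed_regs_def M4_def by auto
  ultimately have phase: "reaches layer_phase M (layer_inv 0)
      (Suc (Suc (Suc (Suc ((m - n0) * (5 + j * (row_time + 6) + 2) + 1)))))"
    unfolding layer_phase_def by (intro reaches_Instr_Seq) simp
  have "Suc (Suc (Suc (Suc (d * (5 + J + 2) + 1)))) = 5 + d * (7 + J)" for d J :: nat
    by simp
  then show ?thesis using phase by (simp only:)
qed

lemma output_cell_reaches:
  assumes "layer_inv 0 M"
  shows "reaches output_cell M (\<lambda>M'. M' reg_m = mahonian_pos m (j - 1) (i - 1) k) 2"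
proof -
  have "n0 + (m - n0) = m" "m - n0 = i - 1" using i_range by auto
  then have "M (32 + j * Suc k + k) = mahonian_pos m (j - 1) (i - 1) k"
    using assms j_range unfolding layer_inv_def row_is_def by auto
  then show ?thesis
    using assms unfolding output_cell_def layer_inv_def fixed_regs_def
    by (intro reaches_mono[OF reaches_Instr_Seq[OF reaches_Instr]]) simp_all
qed

lemma main_prog_reaches:
  "reaches main_prog (snd (init4 m k j i)) (\<lambda>M'. M' reg_m = T m k j i) (200 * Suc m ^ 5)"
proof -
  have "reaches main_prog (snd (init4 m k j i)) (\<lambda>M'. M' reg_m = mahonian_pos m (j - 1) (i - 1) k)
      ((13 + (n0 - 1) * (row_time + 4)) + ((4 + j * (row_time + 6))
        + ((5 + (m - n0) * (7 + j * (row_time + 6))) + 2)))"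
    unfolding main_prog_def
    by (rule reaches_Seq[OF mahonian_phase_reaches reaches_Seq[OF init_phase_reaches
          reaches_Seq[OF layer_phase_reaches output_cell_reaches]]])
  moreover have "mahonian_pos m (j - 1) (i - 1) k = T m k j i"
    using T_eq_mahonian_pos j_range i_range by simp
  moreover have "(13 + (n0 - 1) * (row_time + 4)) + ((4 + j * (row_time + 6))
        + ((5 + (m - n0) * (7 + j * (row_time + 6))) + 2)) \<le> 200 * Suc m ^ 5"
    using j_range by (intro time_poly_bound) auto
  ultimately show ?thesis by (auto elim!: reaches_mono reaches_conseq)
qed

end

lemma wf_main_prog: "wf_com main_prog"
  by (simp add: main_prog_def mahonian_phase_def mahonian_step_def init_phase_def init_step_def
      layer_phase_def layer_step_def update_step_def output_cell_def row_loop_def row_step_def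
      window_loop_def window_step_def)

theorem lemma2:
  shows "\<exists>(P :: instr list) (c :: nat) (d :: nat).
           \<forall>m k j i. 1 \<le> m \<longrightarrow> k \<le> m * (m - 1) div 2 \<longrightarrow> j \<in> {1..m} \<longrightarrow> i \<in> {1..m} \<longrightarrow>
             (let cf = run P (c * (m + 1) ^ d) (init4 m k j i)
              in halted P cf \<and> snd cf 0 = T m k j i)"
proof (intro exI allI impI)
  fix m k j i :: nat
  assume "1 \<le> m" "k \<le> m * (m - 1) div 2" "j \<in> {1..m}" "i \<in> {1..m}"
  then interpret table_input m k j i by unfold_locales
  obtain M' where "M' reg_m = T m k j i"
    and "run (compile 0 main_prog @ [Halt]) (200 * Suc m ^ 5) (0, snd (init4 m k j i)) = (code_size main_prog, M')"
    and "halted (compile 0 main_prog @ [Halt]) (code_size main_prog, M')"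
    by (rule reaches_run[OF main_prog_reaches wf_main_prog])
  moreover have "init4 m k j i = (0, snd (init4 m k j i))" by (simp add: init4_def)
  ultimately show "let cf = run (compile 0 main_prog @ [Halt]) (200 * (m + 1) ^ 5) (init4 m k j i)
      in halted (compile 0 main_prog @ [Halt]) cf \<and> snd cf 0 = T m k j i"
    by (metis Suc_eq_plus1 snd_conv)
qed

end
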